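(* The logic $\mathrm{LTL}[\mathsf{F}]$ can be exponentially more succinct than $\mathsf{F}(\mathrm{LTL}[\mathsf{Y},\mathsf{wY},\mathsf{O},\mathsf{H}])$ (over finite traces). That is, there exist finite sets of atomic propositions $AP_n$ and languages $\mathcal{L}_n\subseteq(2^{AP_n})^+$, $n\ge 1$, such that for every $n\ge1$: (i) there is $\phi\in\mathrm{LTL}[\mathsf{F}]$ with $\mathcal{L}(\phi)=\mathcal{L}_n$ and $\mathrm{size}(\phi)$ bounded by a polynomial in $n$; and (ii) every $\psi\in\mathsf{F}(\mathrm{LTL}[\mathsf{Y},\mathsf{wY},\mathsf{O},\mathsf{H}])$ with $\mathcal{L}(\psi)=\mathcal{L}_n$ has $\mathrm{size}(\psi)\in 2^{\Omega(n)}$.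
   Context: Let $AP$ be a finite set of atomic propositions and $\Sigma=2^{AP}$. Formulae (in negation normal form) are generated by $\phi ::= p \mid \neg p \mid \phi\lor\phi\mid\phi\land\phi\mid \mathsf{X}\phi\mid\mathsf{wX}\phi\mid\mathsf{F}\phi\mid\mathsf{G}\phi\mid\mathsf{Y}\phi\mid\mathsf{wY}\phi\mid\mathsf{O}\phi\mid\mathsf{H}\phi$ with $p\in AP$. For a finite non-empty trace $\sigma=w_0\cdots w_m\in\Sigma^+$ ($|\sigma|=m+1$, $\sigma[i]=w_i$) and $0\le i<|\sigma|$: $\sigma,i\models p$ iff $p\in\sigma[i]$; $\sigma,i\models\neg p$ iff $p\notin\sigma[i]$; $\lor,\land$ as usual; $\sigma,i\models\mathsf{X}\phi$ iff $i+1<|\sigma|$ and $\sigma,i+1\models\phi$; $\sigma,i\models\mathsf{wX}\phi$ iff $i+1=|\sigma|$ or $\sigma,i+1\models\phi$; $\sigma,i\models\mathsf{F}\phi$ iff $\sigma,j\models\phi$ for some $i\le j<|\sigma|$; $\sigma,i\models\mathsf{G}\phi$ iff $\sigma,j\models\phi$ for all $i\le j<|\sigma|$; $\sigma,i\models\mathsf{Y}\phi$ iff $i>0$ and $\sigma,i-1\models\phi$; $\sigma,i\models\mathsf{wY}\phi$ iff $i=0$ or $\sigma,i-1\models\phi$; $\sigma,i\models\mathsf{O}\phi$ iff $\sigma,j\models\phi$ for some $0\le j\le i$; $\sigma,i\models\mathsf{H}\phi$ iff $\sigma,j\models\phi$ for all $0\le j\le i$. $\sigma\models\phi$ means $\sigma,0\models\phi$;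 $\mathcal{L}(\phi)=\{\sigma\in\Sigma^+:\sigma\models\phi\}$. Size: literals have size 1, unary temporal operators add 1, $\mathrm{size}(\phi_1\circ\phi_2)=\mathrm{size}(\phi_1)+\mathrm{size}(\phi_2)+1$ for $\circ\in\{\land,\lor\}$. For a set $S$ of temporal operators, $\mathrm{LTL}[S]$ is the set of formulae whose temporal operators lie in $S$, and $\mathsf{F}(\mathrm{LTL}[S])$ is the set of formulae $\mathsf{F}(\alpha)$ with $\alpha\in\mathrm{LTL}[S]$. *)

theory Defs
  imports Complex_Main
begin

datatype ltl =
    Prop nat | NProp nat
  | Or ltl ltl | And ltl ltl
  | Nxt ltl | WNxt ltl | Fin ltl | Glob ltl
  | Yst ltl | WYst ltl | Once ltl | Hist ltl

datatype top = OpX | OpWX | OpF | OpG | OpY | OpWY | OpO | OpH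

fun sat :: "nat set list \<Rightarrow> nat \<Rightarrow> ltl \<Rightarrow> bool" where
  "sat \<sigma> i (Prop p) = (p \<in> \<sigma> ! i)"
| "sat \<sigma> i (NProp p) = (p \<notin> \<sigma> ! i)"
| "sat \<sigma> i (Or a b) = (sat \<sigma> i a \<or> sat \<sigma> i b)"
| "sat \<sigma> i (And a b) = (sat \<sigma> i a \<and> sat \<sigma> i b)"
| "sat \<sigma> i (Nxt a) = (i + 1 < length \<sigma> \<and> sat \<sigma> (i + 1) a)"
| "sat \<sigma> i (WNxt a) = (i + 1 = length \<sigma> \<or> sat \<sigma> (i + 1) a)"
| "sat \<sigma> i (Fin a) = (\<exists>j. i \<le> j \<and> j < length \<sigma> \<and> sat \<sigma> j a)"
| "sat \<sigma> i (Glob a) = (\<forall>j. i \<le> j \<and> j < length \<sigma> \<longrightarrow> sat \<sigma> j a)"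
| "sat \<sigma> i (Yst a) = (i > 0 \<and> sat \<sigma> (i - 1) a)"
| "sat \<sigma> i (WYst a) = (i = 0 \<or> sat \<sigma> (i - 1) a)"
| "sat \<sigma> i (Once a) = (\<exists>j. j \<le> i \<and> sat \<sigma> j a)"
| "sat \<sigma> i (Hist a) = (\<forall>j. j \<le> i \<longrightarrow> sat \<sigma> j a)"

fun fsize :: "ltl \<Rightarrow> nat" where
  "fsize (Prop p) = 1"
| "fsize (NProp p) = 1"
| "fsize (Or a b) = fsize a + fsize b + 1"
| "fsize (And a b) = fsize a + fsize b + 1"
| "fsize (Nxt a) = fsize a + 1"
| "fsize (WNxt a) = fsize a + 1"
| "fsize (Fin a) = fsize a + 1"
| "fsize (Glob a) = fsize a + 1"
| "fsize (Yst a) = fsize a + 1"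
| "fsize (WYst a) = fsize a + 1"
| "fsize (Once a) = fsize a + 1"
| "fsize (Hist a) = fsize a + 1"

fun atoms :: "ltl \<Rightarrow> nat set" where
  "atoms (Prop p) = {p}"
| "atoms (NProp p) = {p}"
| "atoms (Or a b) = atoms a \<union> atoms b"
| "atoms (And a b) = atoms a \<union> atoms b"
| "atoms (Nxt a) = atoms a"
| "atoms (WNxt a) = atoms a"
| "atoms (Fin a) = atoms a"
| "atoms (Glob a) = atoms a"
| "atoms (Yst a) = atoms a"
| "atoms (WYst a) = atoms a"
| "atoms (Once a) = atoms a"
| "atoms (Hist a) = atoms a"

fun tops :: "ltl \<Rightarrow> top set" where
  "tops (Prop p) = {}"
| "tops (NProp p) = {}"
| "tops (Or a b) = tops a \<union> tops b"
| "tops (And a b) = tops a \<union> tops b"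
| "tops (Nxt a) = insert OpX (tops a)"
| "tops (WNxt a) = insert OpWX (tops a)"
| "tops (Fin a) = insert OpF (tops a)"
| "tops (Glob a) = insert OpG (tops a)"
| "tops (Yst a) = insert OpY (tops a)"
| "tops (WYst a) = insert OpWY (tops a)"
| "tops (Once a) = insert OpO (tops a)"
| "tops (Hist a) = insert OpH (tops a)"

definition in_LTL :: "top set \<Rightarrow> nat set \<Rightarrow> ltl \<Rightarrow> bool" where
  "in_LTL S AP \<phi> \<longleftrightarrow> tops \<phi> \<subseteq> S \<and> atoms \<phi> \<subseteq> AP"

definition in_F_LTL :: "top set \<Rightarrow> nat set \<Rightarrow> ltl \<Rightarrow> bool" where
  "in_F_LTL S AP \<psi> \<longleftrightarrow> (\<exists>\<alpha>. \<psi> = Fin \<alpha> \<and> in_LTL S AP \<alpha>)"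

definition traces :: "nat set \<Rightarrow> nat set list set" where
  "traces AP = {\<sigma>. \<sigma> \<noteq> [] \<and> set \<sigma> \<subseteq> Pow AP}"

definition lang :: "nat set \<Rightarrow> ltl \<Rightarrow> nat set list set" where
  "lang AP \<phi> = {\<sigma> \<in> traces AP. sat \<sigma> 0 \<phi>}"

end

theory Submission
  imports Defs "HOL-Library.FuncSet"
begin

text \<open>
  The formula \<open>phi n = F (\<And>j<2n. p(2j) \<or> F p(2j+1))\<close> has size \<open>10n\<close>.

  A formula \<open>F \<alpha>\<close> with \<open>\<alpha>\<close> a past formula sees a prefix \<open>u\<close> of a trace \<open>u v\<close> only
  through its profile: for each subformula \<open>\<beta>\<close> of \<open>\<alpha>\<close>, whether \<open>\<beta>\<close> holds somewhere in \<open>u\<close>,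
  everywhere in \<open>u\<close>, and at the last position of \<open>u\<close>. Hence \<open>F \<alpha>\<close> separates at most
  \<open>8 ^ size \<alpha>\<close> prefixes.

  Code a set \<open>y \<subseteq> {..<n}\<close> by \<open>A y = y \<union> {n + i | i \<notin> y}\<close>, so that distinct codes are
  \<open>\<subseteq>\<close>-incomparable. A family \<open>X\<close> of such sets becomes a prefix with one letter
  \<open>{p(2j) | j \<notin> A x}\<close> for each \<open>x \<in> X\<close>, a query \<open>y\<close> becomes the final letter
  \<open>{p(2j+1) | j \<in> A y}\<close>, and \<open>phi n\<close> holds on the concatenation iff \<open>y \<in> X\<close>. So a past
  formula \<open>F \<alpha>\<close> equivalent to \<open>phi n\<close> separates all \<open>2 ^ 2 ^ n\<close> families, whence
  \<open>2 ^ n \<le> 3 size \<alpha>\<close>.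
\<close>

abbreviation past_ops :: "top set" where "past_ops \<equiv> {OpY, OpWY, OpO, OpH}"

fun subformulas :: "ltl \<Rightarrow> ltl set" where
  "subformulas (Prop p) = {Prop p}"
| "subformulas (NProp p) = {NProp p}"
| "subformulas (Or a b) = insert (Or a b) (subformulas a \<union> subformulas b)"
| "subformulas (And a b) = insert (And a b) (subformulas a \<union> subformulas b)"
| "subformulas (Nxt a) = insert (Nxt a) (subformulas a)"
| "subformulas (WNxt a) = insert (WNxt a) (subformulas a)"
| "subformulas (Fin a) = insert (Fin a) (subformulas a)"
| "subformulas (Glob a) = insert (Glob a) (subformulas a)"
| "subformulas (Yst a) = insert (Yst a) (subformulas a)"
| "subformulas (WYst a) = insert (WYst a) (subformulas a)"
| "subformulas (Once a) = insert (Once a) (subformulas a)"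
| "subformulas (Hist a) = insert (Hist a) (subformulas a)"

lemma self_in_subformulas: "a \<in> subformulas a"
  by (cases a) auto

lemma finite_subformulas: "finite (subformulas a)"
  by (induction a) auto

lemma card_subformulas_le_fsize: "card (subformulas a) \<le> fsize a"
proof (induction a)
  case (Or a b)
  have "card (subformulas (Or a b)) \<le> Suc (card (subformulas a \<union> subformulas b))"
    by (simp add: card_insert_if finite_subformulas)
  also have "\<dots> \<le> Suc (card (subformulas a) + card (subformulas b))"
    using card_Un_le by simp
  finally show ?case using Or by simp
next
  case (And a b)
  have "card (subformulas (And a b)) \<le> Suc (card (subformulas a \<union> subformulas b))"
    by (simp add: card_insert_if finite_subformulas)
  also have "\<dots> \<le> Suc (card (subformulas a) + card (subformulas b))"
    using card_Un_le by simp
  finally show ?case using And by simp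
qed (auto simp: finite_subformulas card_insert_if)

lemma sat_append_past:
  "tops a \<subseteq> past_ops \<Longrightarrow> i < length u \<Longrightarrow> sat (u @ v) i a = sat u i a"
  by (induction a arbitrary: i) (auto simp: nth_append)

lemma ex_le_add_split: "(\<exists>j\<le>(l::nat) + t. P j) \<longleftrightarrow> (\<exists>j<l. P j) \<or> (\<exists>s\<le>t. P (l + s))"
  by (metis add_le_cancel_left le_add_diff_inverse less_imp_le_nat not_le trans_le_add1)

lemma ex_less_add_split: "(\<exists>j<(l::nat) + m. P j) \<longleftrightarrow> (\<exists>j<l. P j) \<or> (\<exists>s<m. P (l + s))"
  by (metis add_less_cancel_left le_add_diff_inverse not_le trans_less_add1)

lemma sat_Once_append:
  assumes "tops a \<subseteq> past_ops"
  shows "sat (u @ v) (length u + t) (Once a) \<longleftrightarrow>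
    (\<exists>j<length u. sat u j a) \<or> (\<exists>s\<le>t. sat (u @ v) (length u + s) a)"
  using sat_append_past[OF assms] by (auto simp: ex_le_add_split)

lemma sat_Hist_append:
  assumes "tops a \<subseteq> past_ops"
  shows "sat (u @ v) (length u + t) (Hist a) \<longleftrightarrow>
    (\<forall>j<length u. sat u j a) \<and> (\<forall>s\<le>t. sat (u @ v) (length u + s) a)"
  using sat_append_past[OF assms] ex_le_add_split[of "length u" t "\<lambda>j. \<not> sat (u @ v) j a"]
  by auto

definition profile :: "nat set list \<Rightarrow> ltl \<Rightarrow> bool \<times> bool \<times> bool" where
  "profile u b = ((\<exists>i<length u. sat u i b), (\<forall>i<length u. sat u i b), sat u (length u - 1) b)"

lemma sat_append_past_eq_if_profiles_eq:
  assumes "tops a \<subseteq> past_ops" "u \<noteq> []" "u' \<noteq> []"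
    "\<forall>b\<in>subformulas a. profile u b = profile u' b" "t < length v"
  shows "sat (u @ v) (length u + t) a = sat (u' @ v) (length u' + t) a"
  using assms
proof (induction a arbitrary: t)
  case (Yst a)
  have past: "tops a \<subseteq> past_ops"
    using Yst.prems(1) by simp
  show ?case
  proof (cases t)
    case 0
    have "sat u (length u - 1) a = sat u' (length u' - 1) a"
      using Yst.prems(4) by (simp add: self_in_subformulas profile_def)
    with 0 show ?thesis
      using sat_append_past[OF past] Yst.prems(2,3) by simp
  next
    case (Suc s)
    with Yst.IH[OF past Yst.prems(2,3), of s] Yst.prems(4,5) show ?thesis
      by simp
  qed
next
  case (WYst a)
  have past: "tops a \<subseteq> past_ops"
    using WYst.prems(1) by simp
  show ?case
  proof (cases t)
    case 0
    have "sat u (length u - 1) a = sat u' (length u' - 1) a"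
      using WYst.prems(4) by (simp add: self_in_subformulas profile_def)
    with 0 show ?thesis
      using sat_append_past[OF past] WYst.prems(2,3) by simp
  next
    case (Suc s)
    with WYst.IH[OF past WYst.prems(2,3), of s] WYst.prems(4,5) show ?thesis
      by simp
  qed
next
  case (Once a)
  have past: "tops a \<subseteq> past_ops"
    using Once.prems(1) by simp
  have "(\<exists>j<length u. sat u j a) = (\<exists>j<length u'. sat u' j a)"
    using Once.prems(4) by (simp add: self_in_subformulas profile_def)
  moreover have "(\<exists>s\<le>t. sat (u @ v) (length u + s) a) = (\<exists>s\<le>t. sat (u' @ v) (length u' + s) a)"
    using Once.IH[OF past Once.prems(2,3)] Once.prems(4,5) by (simp cong: conj_cong)
  ultimately show ?case
    by (simp only: sat_Once_append[OF past])
next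
  case (Hist a)
  have past: "tops a \<subseteq> past_ops"
    using Hist.prems(1) by simp
  have "(\<forall>j<length u. sat u j a) = (\<forall>j<length u'. sat u' j a)"
    using Hist.prems(4) by (simp add: self_in_subformulas profile_def)
  moreover have "(\<forall>s\<le>t. sat (u @ v) (length u + s) a) = (\<forall>s\<le>t. sat (u' @ v) (length u' + s) a)"
    using Hist.IH[OF past Hist.prems(2,3)] Hist.prems(4,5) by simp
  ultimately show ?case
    by (simp only: sat_Hist_append[OF past])
qed (simp_all add: nth_append)

lemma sat_Fin_append_past_eq_if_profiles_eq:
  assumes past: "tops a \<subseteq> past_ops" and "u \<noteq> []" "u' \<noteq> []"
    and profiles: "\<forall>b\<in>subformulas a. profile u b = profile u' b"
  shows "sat (u @ v) 0 (Fin a) = sat (u' @ v) 0 (Fin a)"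
proof -
  have split: "sat (w @ v) 0 (Fin a) \<longleftrightarrow>
      (\<exists>j<length w. sat w j a) \<or> (\<exists>t<length v. sat (w @ v) (length w + t) a)" for w
    using sat_append_past[OF past, of _ w v] by (auto simp: ex_less_add_split)
  have "(\<exists>j<length u. sat u j a) = (\<exists>j<length u'. sat u' j a)"
    using profiles by (simp add: self_in_subformulas profile_def)
  then show ?thesis
    unfolding split using sat_append_past_eq_if_profiles_eq[OF assms] by auto
qed

lemma card_le_8_pow_fsize_if_distinguishing:
  assumes past: "tops a \<subseteq> past_ops"
    and nonempty: "\<And>x. x \<in> D \<Longrightarrow> w x \<noteq> []"
    and distinguishing: "\<And>x y. x \<in> D \<Longrightarrow> y \<in> D \<Longrightarrow>
      (\<And>v. sat (w x @ v) 0 (Fin a) = sat (w y @ v) 0 (Fin a)) \<Longrightarrow> x = y"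
  shows "card D \<le> 8 ^ fsize a"
proof -
  define h where "h x = restrict (profile (w x)) (subformulas a)" for x
  have "inj_on h D"
  proof (rule inj_onI)
    fix x y assume x: "x \<in> D" and y: "y \<in> D" and "h x = h y"
    then have "\<forall>b\<in>subformulas a. profile (w x) b = profile (w y) b"
      unfolding h_def by (metis restrict_apply')
    then show "x = y"
      using distinguishing[OF x y] sat_Fin_append_past_eq_if_profiles_eq[OF past]
        nonempty[OF x] nonempty[OF y] by blast
  qed
  moreover have "h ` D \<subseteq> subformulas a \<rightarrow>\<^sub>E UNIV"
    by (auto simp: h_def)
  ultimately have "card D \<le> card (subformulas a \<rightarrow>\<^sub>E (UNIV :: (bool \<times> bool \<times> bool) set))"
    by (simp add: card_inj_on_le finite_PiE finite_subformulas)
  also have "\<dots> = 8 ^ card (subformulas a)"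
    by (simp add: card_PiE finite_subformulas card_UNIV_bool flip: UNIV_Times_UNIV
        del: UNIV_Times_UNIV)
  also have "\<dots> \<le> 8 ^ fsize a"
    by (simp add: card_subformulas_le_fsize)
  finally show ?thesis .
qed

definition clause :: "nat \<Rightarrow> ltl" where
  "clause j = Or (Prop (2*j)) (Fin (Prop (2*j+1)))"

fun clauses_upto :: "nat \<Rightarrow> ltl" where
  "clauses_upto 0 = clause 0"
| "clauses_upto (Suc k) = And (clause (Suc k)) (clauses_upto k)"

definition phi :: "nat \<Rightarrow> ltl" where
  "phi n = Fin (clauses_upto (2*n - 1))"

lemma sat_clauses_upto: "sat \<sigma> i (clauses_upto k) \<longleftrightarrow> (\<forall>j\<le>k. sat \<sigma> i (clause j))"
  by (induction k) (auto simp: le_Suc_eq)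

lemma fsize_clauses_upto: "fsize (clauses_upto k) = 5*k + 4"
  by (induction k) (auto simp: clause_def)

lemma tops_clauses_upto: "tops (clauses_upto k) = {OpF}"
  by (induction k) (auto simp: clause_def)

lemma atoms_clauses_upto: "atoms (clauses_upto k) \<subseteq> {..<2*k+2}"
  by (induction k) (auto simp: clause_def)

lemma phi_in_LTL_F: "n \<ge> 1 \<Longrightarrow> in_LTL {OpF} {..<4*n} (phi n)"
  using atoms_clauses_upto[of "2*n - 1"] by (auto simp: in_LTL_def phi_def tops_clauses_upto)

lemma fsize_phi: "n \<ge> 1 \<Longrightarrow> fsize (phi n) = 10 * n"
  by (simp add: phi_def fsize_clauses_upto)

lemma sat_phi_iff:
  assumes "n \<ge> 1"
  shows "sat \<sigma> 0 (phi n) \<longleftrightarrow> (\<exists>k<length \<sigma>. \<forall>j<2*n.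
    2*j \<in> \<sigma>!k \<or> (\<exists>k'. k \<le> k' \<and> k' < length \<sigma> \<and> 2*j+1 \<in> \<sigma>!k'))"
proof -
  have "j \<le> 2*n - 1 \<longleftrightarrow> j < 2*n" for j
    using assms by auto
  then show ?thesis
    by (simp add: phi_def sat_clauses_upto clause_def)
qed

definition antichain_code :: "nat \<Rightarrow> nat set \<Rightarrow> nat set" where
  "antichain_code n x = x \<union> (\<lambda>i. n + i) ` ({..<n} - x)"

lemma antichain_code_subset: "x \<subseteq> {..<n} \<Longrightarrow> antichain_code n x \<subseteq> {..<2*n}"
  by (auto simp: antichain_code_def)

lemma antichain_code_subset_imp_eq:
  assumes x: "x \<subseteq> {..<n}" and y: "y \<subseteq> {..<n}"
    and sub: "antichain_code n x \<subseteq> antichain_code n y"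
  shows "x = y"
proof (intro set_eqI iffI)
  fix i assume "i \<in> x"
  then have "i \<in> antichain_code n y" and "i < n"
    using x sub by (auto simp: antichain_code_def)
  then show "i \<in> y"
    by (auto simp: antichain_code_def)
next
  fix i assume i: "i \<in> y"
  show "i \<in> x"
  proof (rule ccontr)
    assume "i \<notin> x"
    then have "n + i \<in> antichain_code n y"
      using i y sub by (auto simp: antichain_code_def)
    then show False
      using i y by (auto simp: antichain_code_def)
  qed
qed

lemma antichain_code_not_full:
  assumes n: "n \<ge> 1" and y: "y \<subseteq> {..<n}"
  shows "\<exists>j<2*n. j \<notin> antichain_code n y"
proof (cases "0 \<in> y")
  case True
  then have "n \<notin> antichain_code n y"
    using y by (auto simp: antichain_code_def)
  with n show ?thesis
    by (intro exI[of _ n]) simp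
next
  case False
  then have "0 \<notin> antichain_code n y"
    using n by (auto simp: antichain_code_def)
  with n show ?thesis
    by (intro exI[of _ 0]) simp
qed

definition member_letter :: "nat \<Rightarrow> nat set \<Rightarrow> nat set" where
  "member_letter n x = (\<lambda>j. 2*j) ` ({..<2*n} - antichain_code n x)"

definition query_letter :: "nat \<Rightarrow> nat set \<Rightarrow> nat set" where
  "query_letter n y = (\<lambda>j. 2*j+1) ` antichain_code n y"

text \<open>The leading empty letter keeps the prefix non-empty also for \<open>xs = []\<close>.\<close>
definition members_trace :: "nat \<Rightarrow> nat set list \<Rightarrow> nat set list" where
  "members_trace n xs = {} # map (member_letter n) xs"

lemma members_query_trace_in_traces:
  assumes "\<forall>x\<in>set xs. x \<subseteq> {..<n}" "y \<subseteq> {..<n}"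
  shows "members_trace n xs @ [query_letter n y] \<in> traces {..<4*n}"
  using assms unfolding traces_def members_trace_def member_letter_def query_letter_def
    antichain_code_def by auto

lemma member_letter_covered_iff:
  assumes "x \<subseteq> {..<n}"
  shows "(\<forall>j<2*n. 2*j \<in> member_letter n x \<or> j \<in> antichain_code n y) \<longleftrightarrow>
    antichain_code n x \<subseteq> antichain_code n y"
  using antichain_code_subset[OF assms] by (auto simp: member_letter_def)

lemma sat_phi_members_query_iff:
  assumes n: "n \<ge> 1" and xs: "\<forall>x\<in>set xs. x \<subseteq> {..<n}" and y: "y \<subseteq> {..<n}"
  shows "sat (members_trace n xs @ [query_letter n y]) 0 (phi n) \<longleftrightarrow> y \<in> set xs"
proof -
  define \<sigma> where "\<sigma> = members_trace n xs @ [query_letter n y]"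
  define covered where "covered w \<longleftrightarrow> (\<forall>j<2*n. 2*j \<in> w \<or> j \<in> antichain_code n y)" for w
  have set_\<sigma>: "set \<sigma> = insert {} (insert (query_letter n y) (member_letter n ` set xs))"
    by (auto simp: \<sigma>_def members_trace_def)
  have odd_later: "(\<exists>k'. k \<le> k' \<and> k' < length \<sigma> \<and> 2*j+1 \<in> \<sigma>!k') \<longleftrightarrow>
      j \<in> antichain_code n y" if "k < length \<sigma>" for k j
  proof
    assume "\<exists>k'. k \<le> k' \<and> k' < length \<sigma> \<and> 2*j+1 \<in> \<sigma>!k'"
    then have "\<exists>w\<in>set \<sigma>. 2*j+1 \<in> w"
      by (metis nth_mem)
    then show "j \<in> antichain_code n y"
      unfolding set_\<sigma>
      by (auto simp: member_letter_def query_letter_def Suc_double_not_eq_double)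
  next
    assume "j \<in> antichain_code n y"
    moreover have "\<sigma> ! (length \<sigma> - 1) = query_letter n y"
      by (simp add: \<sigma>_def)
    ultimately show "\<exists>k'. k \<le> k' \<and> k' < length \<sigma> \<and> 2*j+1 \<in> \<sigma>!k'"
      using that by (intro exI[of _ "length \<sigma> - 1"]) (auto simp: query_letter_def)
  qed
  have "sat \<sigma> 0 (phi n) \<longleftrightarrow> (\<exists>k<length \<sigma>. covered (\<sigma>!k))"
    unfolding sat_phi_iff[OF n] covered_def by (simp only: odd_later cong: conj_cong)
  also have "\<dots> \<longleftrightarrow> (\<exists>w\<in>set \<sigma>. covered w)"
    by (metis in_set_conv_nth)
  also have "\<dots> \<longleftrightarrow> (\<exists>x\<in>set xs. covered (member_letter n x))"
  proof -
    obtain j where "j < 2*n" "j \<notin> antichain_code n y"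
      using antichain_code_not_full[OF n y] by blast
    then have "\<not> covered {}" "\<not> covered (query_letter n y)"
      by (auto simp: covered_def query_letter_def double_not_eq_Suc_double)
    then show ?thesis
      unfolding set_\<sigma> by blast
  qed
  also have "\<dots> \<longleftrightarrow> y \<in> set xs"
  proof -
    have "covered (member_letter n x) \<longleftrightarrow> x = y" if "x \<in> set xs" for x
      using xs y that antichain_code_subset_imp_eq[of x n y]
      by (auto simp: covered_def member_letter_covered_iff)
    then show ?thesis
      by blast
  qed
  finally show ?thesis
    unfolding \<sigma>_def .
qed

lemma two_pow_le_3_fsize_if_equiv_phi:
  assumes n: "n \<ge> 1" and past: "tops a \<subseteq> past_ops"
    and equiv: "\<forall>\<sigma>\<in>traces {..<4*n}. sat \<sigma> 0 (Fin a) = sat \<sigma> 0 (phi n)"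
  shows "2^n \<le> 3 * fsize a"
proof -
  define D where "D = Pow (Pow {..<n})"
  have "\<forall>X\<in>D. \<exists>xs. set xs = X"
    unfolding D_def by (meson PowD finite_Pow_iff finite_lessThan finite_list finite_subset)
  then obtain list_of where list_of: "\<forall>X\<in>D. set (list_of X) = X"
    by (auto dest: bchoice)
  let ?w = "\<lambda>X. members_trace n (list_of X)"
  have member_iff: "y \<in> X \<longleftrightarrow> sat (?w X @ [query_letter n y]) 0 (Fin a)"
    if "X \<in> D" "y \<subseteq> {..<n}" for X y
  proof -
    have "\<forall>x\<in>set (list_of X). x \<subseteq> {..<n}"
      using that list_of by (auto simp: D_def)
    then have "y \<in> X \<longleftrightarrow> sat (?w X @ [query_letter n y]) 0 (phi n)"
      and "?w X @ [query_letter n y] \<in> traces {..<4*n}"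
      using that list_of sat_phi_members_query_iff[OF n] members_query_trace_in_traces by auto
    with equiv show ?thesis
      by blast
  qed
  have "card D \<le> 8 ^ fsize a"
  proof (rule card_le_8_pow_fsize_if_distinguishing[OF past])
    show "?w X \<noteq> []" for X
      by (simp add: members_trace_def)
  next
    fix X X' assume X: "X \<in> D" and X': "X' \<in> D"
      and same: "\<And>v. sat (?w X @ v) 0 (Fin a) = sat (?w X' @ v) 0 (Fin a)"
    have "y \<in> X \<longleftrightarrow> y \<in> X'" if "y \<subseteq> {..<n}" for y
      using member_iff[OF X that] member_iff[OF X' that] same[of "[query_letter n y]"] by blast
    then show "X = X'"
      using X X' by (auto simp: D_def)
  qed
  then have "(2::nat) ^ 2 ^ n \<le> 2 ^ (3 * fsize a)"
    by (simp add: D_def card_Pow power_mult)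
  then show ?thesis
    by simp
qed

lemma two_powr_half_le_if_two_pow_le:
  fixes n m :: nat
  assumes "4 \<le> n" and "2^n \<le> 3*m"
  shows "2 powr (1/2 * real n) \<le> real m"
proof -
  have "2 powr (1/2 * real n) \<le> 2 powr (real n - 2)"
    using assms(1) by (intro powr_mono) auto
  also have "\<dots> = 2^n / 4"
    by (simp add: powr_diff powr_realpow)
  also have "\<dots> \<le> real m"
    using of_nat_mono[OF assms(2), where 'a=real] by simp
  finally show ?thesis .
qed

lemma powr_half_le_fsize_if_lang_eq_phi:
  assumes n: "4 \<le> n" and \<psi>: "in_F_LTL past_ops {..<4*n} \<psi>"
    and lang_eq: "lang {..<4*n} \<psi> = lang {..<4*n} (phi n)"
  shows "2 powr (1/2 * real n) \<le> real (fsize \<psi>)"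
proof -
  obtain a where \<psi>_eq: "\<psi> = Fin a" and past: "tops a \<subseteq> past_ops"
    using \<psi> by (auto simp: in_F_LTL_def in_LTL_def)
  have "\<forall>\<sigma>\<in>traces {..<4*n}. sat \<sigma> 0 (Fin a) = sat \<sigma> 0 (phi n)"
    using lang_eq by (auto simp: \<psi>_eq lang_def set_eq_iff)
  then have "2^n \<le> 3 * fsize a"
    using two_pow_le_3_fsize_if_equiv_phi n past by simp
  then have "2 powr (1/2 * real n) \<le> real (fsize a)"
    using two_powr_half_le_if_two_pow_le n by simp
  then show ?thesis
    by (simp add: \<psi>_eq)
qed

theorem theorem2:
  shows "\<exists>(AP :: nat \<Rightarrow> nat set) (L :: nat \<Rightarrow> nat set list set).
     (\<forall>n\<ge>1. finite (AP n) \<and> L n \<subseteq> traces (AP n)) \<and>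
     (\<exists>(c::nat) (k::nat). \<forall>n\<ge>1. \<exists>\<phi>. in_LTL {OpF} (AP n) \<phi> \<and>
          lang (AP n) \<phi> = L n \<and> fsize \<phi> \<le> c * n ^ k + c) \<and>
     (\<exists>(c::real) (N::nat). c > 0 \<and> (\<forall>n\<ge>max 1 N. \<forall>\<psi>.
          in_F_LTL {OpY, OpWY, OpO, OpH} (AP n) \<psi> \<and> lang (AP n) \<psi> = L n
          \<longrightarrow> 2 powr (c * real n) \<le> real (fsize \<psi>)))"
proof -
  have "\<forall>n\<ge>1. in_LTL {OpF} {..<4*n} (phi n) \<and> fsize (phi n) \<le> 10 * n ^ 1 + 10"
    by (simp add: phi_in_LTL_F fsize_phi)
  then show ?thesis
    using powr_half_le_fsize_if_lang_eq_phi
    by (intro exI[of _ "\<lambda>n. {..<4*n}"] exI[of _ "\<lambda>n. lang {..<4*n} (phi n)"] conjI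
        exI[of _ 10] exI[of _ 1] exI[of _ "1/2"] exI[of _ 4])
      (auto simp: lang_def)
qed

end
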